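(* Let $\alpha,\nu>0$ and let $u$ be a sufficiently smooth solution of the second grade fluid equations with Dirichlet boundary condition on $\Omega$. Set $v=u-\alpha\Delta u$ and $\gamma_i(t)=\int_{\Gamma_i}v(t)\cdot n^\perp$. Then for every $i\in\{1,\dots,N\}$ and $t\ge0$, $\gamma_i(t)=\gamma_i(0)e^{-\frac\nu\alpha t}$.
   Context: $\Omega\subset\mathbb R^2$ is a smooth bounded domain with $\partial\Omega=\Gamma\cup\Gamma_1\cup\dots\cup\Gamma_N$ ($\Gamma$ the outer boundary component, $\Gamma_1,\dots,\Gamma_N$ the inner components, smooth closed curves); $n$ outward unit normal, $n^\perp$ unit tangent. The second grade fluid equations with Dirichlet boundary condition are $\partial_t(u-\alpha\Delta u)-\nu\Delta u+u\cdot\nabla(u-\alpha\Delta u)+\sum_j(u-\alpha\Delta u)_j\nabla u_j=-\nabla\pi$, $\operatorname{div}u=0$ in $\Omega$, $u|_{\partial\Omega}=0$. *)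

theory Defs
  imports "HOL-Analysis.Analysis"
begin

text \<open>C-infinity functions on a Euclidean space: differentiable everywhere, and every
  partial derivative (along a basis vector) is again C-infinity (coinductively, i.e. to
  all orders).\<close>
coinductive smooth_fun :: "('a::euclidean_space \<Rightarrow> real) \<Rightarrow> bool" where
  "\<lbrakk> \<forall>x. f differentiable (at x);
     \<forall>b\<in>Basis. smooth_fun (\<lambda>x. frechet_derivative f (at x) b) \<rbrakk> \<Longrightarrow> smooth_fun f"

definition smooth_closed_curve :: "(real \<Rightarrow> real^2) \<Rightarrow> bool" where
  "smooth_closed_curve g \<longleftrightarrow>
     (\<forall>k. smooth_fun (\<lambda>s. g s $ k)) \<and>
     (\<forall>s. g (s + 1) = g s) \<and>
     (\<forall>s. vector_derivative g (at s) \<noteq> 0) \<and>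
     inj_on g {0..<1}"

definition pt :: "(real \<Rightarrow> real^2 \<Rightarrow> real) \<Rightarrow> real \<Rightarrow> real^2 \<Rightarrow> real" where
  "pt F t x = deriv (\<lambda>s. F s x) t"

definition px :: "2 \<Rightarrow> (real \<Rightarrow> real^2 \<Rightarrow> real) \<Rightarrow> real \<Rightarrow> real^2 \<Rightarrow> real" where
  "px j F t x = deriv (\<lambda>h. F t (x + h *\<^sub>R axis j 1)) 0"

definition lap :: "(real \<Rightarrow> real^2 \<Rightarrow> real) \<Rightarrow> real \<Rightarrow> real^2 \<Rightarrow> real" where
  "lap F t x = (\<Sum>j\<in>UNIV. px j (px j F) t x)"

definition comp :: "(real \<Rightarrow> real^2 \<Rightarrow> real^2) \<Rightarrow> 2 \<Rightarrow> real \<Rightarrow> real^2 \<Rightarrow> real" where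
  "comp u i = (\<lambda>t x. u t x $ i)"

definition sg_v :: "real \<Rightarrow> (real \<Rightarrow> real^2 \<Rightarrow> real^2) \<Rightarrow> real \<Rightarrow> real^2 \<Rightarrow> real^2" where
  "sg_v \<alpha> u t x = (\<chi> i. u t x $ i - \<alpha> * lap (comp u i) t x)"

definition second_grade_solution ::
  "real \<Rightarrow> real \<Rightarrow> (real^2) set \<Rightarrow> (real \<Rightarrow> real^2 \<Rightarrow> real^2) \<Rightarrow> (real \<Rightarrow> real^2 \<Rightarrow> real) \<Rightarrow> bool" where
  "second_grade_solution \<alpha> \<nu> \<Omega> u p \<longleftrightarrow>
     (\<forall>i. smooth_fun (\<lambda>(t, x). u t x $ i)) \<and> smooth_fun (\<lambda>(t, x). p t x) \<and>
     (\<forall>t>0. \<forall>x\<in>\<Omega>. \<forall>i.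
        pt (comp (sg_v \<alpha> u) i) t x - \<nu> * lap (comp u i) t x
        + (\<Sum>j\<in>UNIV. u t x $ j * px j (comp (sg_v \<alpha> u) i) t x)
        + (\<Sum>j\<in>UNIV. sg_v \<alpha> u t x $ j * px i (comp u j) t x)
        = - px i p t x) \<and>
     (\<forall>t>0. \<forall>x\<in>\<Omega>. (\<Sum>j\<in>UNIV. px j (comp u j) t x) = 0) \<and>
     (\<forall>t\<ge>0. \<forall>x\<in>frontier \<Omega>. u t x = 0)"

text \<open>Circulation of v(t) along a boundary curve: integral of v . n-perp with respect to
  arc length, computed via the parametrisation g (orientation given by g).\<close>
definition circulation :: "real \<Rightarrow> (real \<Rightarrow> real^2 \<Rightarrow> real^2) \<Rightarrow> (real \<Rightarrow> real^2) \<Rightarrow> real \<Rightarrow> real" where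
  "circulation \<alpha> u g t = integral {0..1} (\<lambda>s. sg_v \<alpha> u t (g s) \<bullet> vector_derivative g (at s))"

end

theory Submission
  imports Defs "HOL-Library.Periodic_Fun"
begin

(* On a boundary curve u vanishes for all times. The momentum equation, which holds up to
   the boundary by continuity, therefore loses its convective term there, and since
   v = u - \<alpha>\<Delta>u = -\<alpha>\<Delta>u on the boundary, the viscous term \<nu>\<Delta>u equals -(\<nu>/\<alpha>) v. Pairing
   with the tangent and integrating once around the closed curve, the term \<Sum>\<^sub>j v\<^sub>j \<partial>\<^sub>\<tau>u\<^sub>j vanishes
   because u is constant along the curve, and \<partial>\<^sub>\<tau>p integrates to zero. Differentiating the
   circulation under the integral sign thus gives \<gamma>' = -(\<nu>/\<alpha>) \<gamma> for t > 0. *)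

lemma smooth_fun_differentiable: "smooth_fun f \<Longrightarrow> f differentiable (at x)"
  by (erule smooth_fun.cases) auto

lemma smooth_fun_partial:
  "smooth_fun f \<Longrightarrow> b \<in> Basis \<Longrightarrow> smooth_fun (\<lambda>x. frechet_derivative f (at x) b)"
  by (erule smooth_fun.cases) auto

lemma continuous_on_smooth_fun: "smooth_fun f \<Longrightarrow> continuous_on S f"
  by (intro continuous_at_imp_continuous_on ballI differentiable_imp_continuous_within
      smooth_fun_differentiable)

lemma smooth_fun_lincomb:
  fixes f g :: "'a::euclidean_space \<Rightarrow> real"
  assumes "smooth_fun f" "smooth_fun g"
  shows "smooth_fun (\<lambda>x. a * f x + b * g x)"
proof -
  define X where "X h \<longleftrightarrow> (\<exists>f g a b. smooth_fun f \<and> smooth_fun g \<and> h = (\<lambda>x. a * f x + b * g x))"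
    for h :: "'a \<Rightarrow> real"
  have "X (\<lambda>x. a * f x + b * g x)" using assms unfolding X_def by blast
  then show ?thesis
  proof (rule smooth_fun.coinduct[of X])
    fix h assume "X h"
    then obtain f g a b where f: "smooth_fun f" and g: "smooth_fun g"
      and h: "h = (\<lambda>x. a * f x + b * g x)"
      unfolding X_def by blast
    have "(h has_derivative (\<lambda>v. a * frechet_derivative f (at x) v + b * frechet_derivative g (at x) v)) (at x)" for x
      unfolding h using f g
      by (intro derivative_intros; metis frechet_derivative_works smooth_fun_differentiable)
    then have "h differentiable (at x)"
      and Dh: "frechet_derivative h (at x) = (\<lambda>v. a * frechet_derivative f (at x) v + b * frechet_derivative g (at x) v)"
      for x
      by (auto simp: differentiable_def frechet_derivative_at[symmetric])
    moreover have "X (\<lambda>x. frechet_derivative h (at x) c)" if "c \<in> Basis" for c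
      unfolding X_def Dh using f g that by (blast intro: smooth_fun_partial)
    ultimately show "\<exists>f. h = f \<and> (\<forall>x. f differentiable at x) \<and>
        (\<forall>b\<in>Basis. X (\<lambda>x. frechet_derivative f (at x) b) \<or> smooth_fun (\<lambda>x. frechet_derivative f (at x) b))"
      by blast
  qed
qed

lemma has_field_derivative_frechet_compose:
  assumes "(c has_vector_derivative w) (at s)" and "f differentiable (at (c s))"
  shows "((\<lambda>h. f (c h)) has_field_derivative frechet_derivative f (at (c s)) w) (at s)"
proof -
  have "linear (frechet_derivative f (at (c s)))"
    using assms(2) by (rule linear_frechet_derivative)
  moreover have "((\<lambda>h. f (c h)) has_derivative (\<lambda>h. frechet_derivative f (at (c s)) (h *\<^sub>R w))) (at s)"
    using assms frechet_derivative_works has_derivative_compose has_vector_derivative_def by blast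
  ultimately show ?thesis
    unfolding has_field_derivative_def
    by (rule_tac has_derivative_eq_rhs) (auto simp: linear_cmul fun_eq_iff)
qed

lemma linear_ode_solution_eq_exp:
  fixes f :: "real \<Rightarrow> real"
  assumes "continuous_on {0..} f"
    and "\<And>t. t > 0 \<Longrightarrow> (f has_real_derivative - k * f t) (at t)" and "t \<ge> 0"
  shows "f t = f 0 * exp (- k * t)"
proof -
  define h where "h x = f x * exp (k * x)" for x
  have "h t = h 0"
  proof (cases "t = 0")
    case False
    show ?thesis
    proof (rule DERIV_isconst_end[of 0 t h])
      show "0 < t" using False \<open>t \<ge> 0\<close> by simp
      show "continuous_on {0..t} h"
        unfolding h_def using assms(1)
        by (intro continuous_on_mult continuous_intros) (auto elim: continuous_on_subset)
      show "(h has_real_derivative 0) (at x)" if "0 < x" "x < t" for x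
        unfolding h_def using assms(2)[OF that(1)]
        by (auto intro!: derivative_eq_intros simp: algebra_simps)
    qed
  qed simp
  then show ?thesis
    by (simp add: h_def exp_minus field_simps)
qed

definition smooth_field :: "(real \<Rightarrow> real^2 \<Rightarrow> real) \<Rightarrow> bool" where
  "smooth_field F \<longleftrightarrow> smooth_fun (\<lambda>(t, x). F t x)"

lemma smooth_field_differentiable:
  "smooth_field F \<Longrightarrow> (\<lambda>(t, x). F t x) differentiable (at z)"
  unfolding smooth_field_def by (rule smooth_fun_differentiable)

lemma px_eq_frechet_derivative:
  assumes "smooth_field F"
  shows "px j F t x = frechet_derivative (\<lambda>(t, x). F t x) (at (t, x)) (0, axis j 1)"
proof -
  have "((\<lambda>h. (t, x + h *\<^sub>R axis j 1)) has_vector_derivative (0, axis j 1)) (at 0)"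
    by (auto intro!: derivative_eq_intros)
  from has_field_derivative_frechet_compose[OF this smooth_field_differentiable[OF assms]]
  show ?thesis
    unfolding px_def by (simp add: DERIV_imp_deriv)
qed

lemma pt_eq_frechet_derivative:
  assumes "smooth_field F"
  shows "pt F t x = frechet_derivative (\<lambda>(t, x). F t x) (at (t, x)) (1, 0)"
proof -
  have "((\<lambda>h. (h, x)) has_vector_derivative (1, 0)) (at t)"
    by (auto intro!: derivative_eq_intros)
  from has_field_derivative_frechet_compose[OF this smooth_field_differentiable[OF assms]]
  show ?thesis
    unfolding pt_def by (simp add: DERIV_imp_deriv)
qed

lemma axis_in_Basis_prod: "((0::real), axis j (1::real)) \<in> (Basis :: (real \<times> (real^2)) set)"
  by (auto simp: Basis_prod_def Basis_vec_def)

lemma smooth_field_has_time_derivative: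
  assumes "smooth_field F"
  shows "((\<lambda>t. F t x) has_real_derivative pt F t x) (at t)"
proof -
  have "((\<lambda>h. (h, x)) has_vector_derivative (1, 0)) (at t)"
    by (auto intro!: derivative_eq_intros)
  from has_field_derivative_frechet_compose[OF this smooth_field_differentiable[OF assms]]
  show ?thesis
    by (simp add: pt_eq_frechet_derivative[OF assms])
qed

lemma smooth_field_px:
  assumes "smooth_field F"
  shows "smooth_field (px j F)"
proof -
  have "(\<lambda>(t, x). px j F t x) = (\<lambda>z. frechet_derivative (\<lambda>(t, x). F t x) (at z) (0, axis j 1))"
    by (auto simp: px_eq_frechet_derivative[OF assms])
  then show ?thesis
    using assms smooth_fun_partial axis_in_Basis_prod unfolding smooth_field_def by metis
qed

lemma smooth_field_pt:
  assumes "smooth_field F"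
  shows "smooth_field (pt F)"
proof -
  have "(\<lambda>(t, x). pt F t x) = (\<lambda>z. frechet_derivative (\<lambda>(t, x). F t x) (at z) (1, 0))"
    by (auto simp: pt_eq_frechet_derivative[OF assms])
  moreover have "((1::real), 0::real^2) \<in> Basis"
    by (simp add: Basis_prod_def)
  ultimately show ?thesis
    using assms smooth_fun_partial unfolding smooth_field_def by metis
qed

lemma smooth_field_lincomb:
  "smooth_field F \<Longrightarrow> smooth_field G \<Longrightarrow> smooth_field (\<lambda>t x. a * F t x + b * G t x)"
  unfolding smooth_field_def using smooth_fun_lincomb[of "\<lambda>(t, x). F t x" "\<lambda>(t, x). G t x" a b]
  by (simp add: case_prod_beta')

lemma smooth_field_lap:
  assumes "smooth_field F"
  shows "smooth_field (lap F)"
proof -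
  have "lap F = (\<lambda>t x. 1 * px 1 (px 1 F) t x + 1 * px 2 (px 2 F) t x)"
    by (simp add: lap_def fun_eq_iff sum_2)
  then show ?thesis
    unfolding \<open>lap F = _\<close> using assms by (intro smooth_field_lincomb smooth_field_px)
qed

lemma smooth_field_sg_v:
  assumes "\<And>j. smooth_field (comp u j)"
  shows "smooth_field (comp (sg_v \<alpha> u) i)"
proof -
  have "comp (sg_v \<alpha> u) i = (\<lambda>t x. 1 * comp u i t x + (- \<alpha>) * lap (comp u i) t x)"
    by (simp add: comp_def sg_v_def fun_eq_iff)
  then show ?thesis
    unfolding \<open>comp (sg_v \<alpha> u) i = _\<close> using assms by (intro smooth_field_lincomb smooth_field_lap)
qed

lemma continuous_on_smooth_field_compose:
  assumes "smooth_field F" and "continuous_on S a" and "continuous_on S b"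
  shows "continuous_on S (\<lambda>z. F (a z) (b z))"
proof -
  have "continuous_on S (\<lambda>z. (\<lambda>(t, x). F t x) (a z, b z))"
    using assms(1) unfolding smooth_field_def
    by (intro continuous_on_compose2[OF continuous_on_smooth_fun continuous_on_Pair[OF assms(2,3)]]) auto
  then show ?thesis by simp
qed

lemma continuous_on_smooth_field:
  "smooth_field F \<Longrightarrow> continuous_on S (\<lambda>z. F (fst z) (snd z))"
  by (rule continuous_on_smooth_field_compose[OF _ continuous_on_fst continuous_on_snd])
    (rule continuous_on_id | assumption)+

lemma smooth_field_has_derivative_along_curve:
  assumes "smooth_field F" and "(c has_vector_derivative w) (at s)"
  shows "((\<lambda>s. F t (c s)) has_real_derivative (\<Sum>j\<in>UNIV. px j F t (c s) * w $ j)) (at s)"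
proof -
  let ?D = "frechet_derivative (\<lambda>(t, x). F t x) (at (t, c s))"
  have "linear ?D"
    using smooth_field_differentiable[OF assms(1)] by (rule linear_frechet_derivative)
  moreover have "(0, w) = (\<Sum>j\<in>UNIV. w $ j *\<^sub>R ((0::real), axis j 1))"
    by (simp add: vec_eq_iff axis_def sum_2 forall_2)
  ultimately have "?D (0, w) = (\<Sum>j\<in>UNIV. w $ j * ?D (0, axis j 1))"
    by (simp only: linear_sum linear_scale real_scaleR_def)
  then have "?D (0, w) = (\<Sum>j\<in>UNIV. px j F t (c s) * w $ j)"
    by (simp add: px_eq_frechet_derivative[OF assms(1)] mult.commute)
  moreover have "((\<lambda>h. (t, c h)) has_vector_derivative (0, w)) (at s)"
    using assms(2) by (auto intro!: derivative_eq_intros)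
  ultimately show ?thesis
    using has_field_derivative_frechet_compose[OF _ smooth_field_differentiable[OF assms(1)]] by fastforce
qed

lemma has_vector_derivative_componentwise_cart:
  fixes c :: "real \<Rightarrow> real^'n"
  assumes "\<And>m. ((\<lambda>s. c s $ m) has_real_derivative D m) (at s)"
  shows "(c has_vector_derivative (\<chi> m. D m)) (at s)"
  unfolding has_vector_derivative_def
  using assms by (subst has_derivative_componentwise_within)
    (auto simp: Basis_vec_def inner_axis has_field_derivative_def mult.commute[of _ "D _"])

lemma smooth_closed_curve_has_vector_derivative:
  assumes "smooth_closed_curve c"
  shows "(c has_vector_derivative (\<chi> m. frechet_derivative (\<lambda>s. c s $ m) (at s) 1)) (at s)"
proof (rule has_vector_derivative_componentwise_cart)
  fix m
  have "smooth_fun (\<lambda>s. c s $ m)"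
    using assms unfolding smooth_closed_curve_def by blast
  then show "((\<lambda>s. c s $ m) has_real_derivative frechet_derivative (\<lambda>s. c s $ m) (at s) 1) (at s)"
    using has_field_derivative_frechet_compose[of "\<lambda>s. s" 1 s] by (simp add: smooth_fun_differentiable)
qed

lemma smooth_closed_curve_vector_derivative:
  assumes "smooth_closed_curve c"
  shows "(c has_vector_derivative vector_derivative c (at s)) (at s)"
  using smooth_closed_curve_has_vector_derivative[OF assms] vector_derivative_at by metis

lemma continuous_on_smooth_closed_curve:
  "smooth_closed_curve c \<Longrightarrow> continuous_on S c"
  using smooth_closed_curve_vector_derivative has_vector_derivative_continuous
  by (blast intro: continuous_at_imp_continuous_on)

lemma continuous_on_vector_derivative_smooth_closed_curve:
  assumes "smooth_closed_curve c"
  shows "continuous_on S (\<lambda>s. vector_derivative c (at s))"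
proof -
  have "smooth_fun (\<lambda>s. frechet_derivative (\<lambda>s. c s $ m) (at s) 1)" for m
    using assms unfolding smooth_closed_curve_def by (auto intro: smooth_fun_partial)
  then have "continuous_on S (\<lambda>s. \<chi> m. frechet_derivative (\<lambda>s. c s $ m) (at s) 1)"
    by (intro continuous_on_vec_lambda continuous_on_smooth_fun)
  then show ?thesis
    using vector_derivative_at[OF smooth_closed_curve_has_vector_derivative[OF assms]] by simp
qed

lemma smooth_closed_curve_in_path_image:
  assumes "smooth_closed_curve c"
  shows "c s \<in> path_image c"
proof -
  interpret periodic_fun_simple' c
    using assms by unfold_locales (simp add: smooth_closed_curve_def)
  have "c s = c (frac s)"
    using plus_of_int[of "frac s" "\<lfloor>s\<rfloor>"] by (simp add: frac_def)
  then show ?thesis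
    unfolding path_image_def using frac_lt_1[of s] by auto
qed

lemma continuous_on_line_integrand:
  fixes F :: "'n::finite \<Rightarrow> real \<Rightarrow> real^2 \<Rightarrow> real" and c' :: "real \<Rightarrow> real^'n"
  assumes "\<And>m. smooth_field (F m)" and "continuous_on UNIV c" and "continuous_on UNIV c'"
    and "continuous_on S a" and "continuous_on S b"
  shows "continuous_on S (\<lambda>z. \<Sum>m\<in>UNIV. F m (a z) (c (b z)) * c' (b z) $ m)"
proof -
  have "continuous_on S (\<lambda>z. c (b z))" "continuous_on S (\<lambda>z. c' (b z))"
    using continuous_on_compose2[OF assms(2,5)] continuous_on_compose2[OF assms(3,5)] by auto
  then have "continuous_on S (\<lambda>z. F m (a z) (c (b z)) * c' (b z) $ m)" for m
    using continuous_on_smooth_field_compose[OF assms(1,4)]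
    by (intro continuous_on_mult continuous_on_component) auto
  then show ?thesis
    by (intro continuous_on_sum) auto
qed

lemma has_real_derivative_line_integral:
  fixes F :: "'n::finite \<Rightarrow> real \<Rightarrow> real^2 \<Rightarrow> real" and c' :: "real \<Rightarrow> real^'n"
  assumes F: "\<And>m. smooth_field (F m)"
    and c: "continuous_on UNIV c" and c': "continuous_on UNIV c'"
  shows "((\<lambda>t. integral {0..1} (\<lambda>s. \<Sum>m\<in>UNIV. F m t (c s) * c' s $ m)) has_real_derivative
           integral {0..1} (\<lambda>s. \<Sum>m\<in>UNIV. pt (F m) t (c s) * c' s $ m)) (at t)"
proof -
  have "((\<lambda>t. integral (cbox 0 1) (\<lambda>s. \<Sum>m\<in>UNIV. F m t (c s) * c' s $ m)) has_real_derivative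
          integral (cbox 0 1) (\<lambda>s. \<Sum>m\<in>UNIV. pt (F m) t (c s) * c' s $ m)) (at t within UNIV)"
  proof (rule leibniz_rule_field_derivative)
    show "((\<lambda>t. \<Sum>m\<in>UNIV. F m t (c s) * c' s $ m) has_real_derivative
        (\<Sum>m\<in>UNIV. pt (F m) t (c s) * c' s $ m)) (at t within UNIV)" for t s
      by (intro DERIV_sum DERIV_cmult_right smooth_field_has_time_derivative F)
    show "(\<lambda>s. \<Sum>m\<in>UNIV. F m t (c s) * c' s $ m) integrable_on cbox 0 1" for t
      using continuous_on_line_integrand[OF F c c' continuous_on_const continuous_on_id]
      by (rule integrable_continuous)
    show "continuous_on (UNIV \<times> cbox 0 1) (\<lambda>(t, s). \<Sum>m\<in>UNIV. pt (F m) t (c s) * c' s $ m)"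
      using continuous_on_line_integrand[OF smooth_field_pt[OF F] c c' continuous_on_fst continuous_on_snd,
          OF continuous_on_id continuous_on_id]
      by (simp add: split_beta)
  qed auto
  then show ?thesis
    by simp
qed

lemma tangential_derivative_eq_0:
  assumes "smooth_field F" and c: "smooth_closed_curve c" and "\<And>s. F t (c s) = 0"
  shows "(\<Sum>m\<in>UNIV. px m F t (c s) * vector_derivative c (at s) $ m) = 0"
proof -
  have "((\<lambda>s. F t (c s)) has_real_derivative (\<Sum>m\<in>UNIV. px m F t (c s) * vector_derivative c (at s) $ m)) (at s)"
    using smooth_field_has_derivative_along_curve[OF assms(1) smooth_closed_curve_vector_derivative[OF c]] .
  moreover have "(\<lambda>s. F t (c s)) = (\<lambda>s. 0)"
    using assms(3) by simp
  ultimately have "((\<lambda>s. 0) has_real_derivative (\<Sum>m\<in>UNIV. px m F t (c s) * vector_derivative c (at s) $ m)) (at s)"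
    by simp
  then show ?thesis
    using DERIV_unique[OF _ DERIV_const] by blast
qed

lemma has_integral_gradient_closed_curve:
  assumes "smooth_field F" and c: "smooth_closed_curve c"
  shows "((\<lambda>s. \<Sum>m\<in>UNIV. px m F t (c s) * vector_derivative c (at s) $ m) has_integral 0) {0..1}"
proof -
  have "((\<lambda>s. F t (c s)) has_vector_derivative (\<Sum>m\<in>UNIV. px m F t (c s) * vector_derivative c (at s) $ m))
      (at s within {0..1})" for s
    using smooth_field_has_derivative_along_curve[OF assms(1) smooth_closed_curve_vector_derivative[OF c]]
    by (simp add: has_real_derivative_iff_has_vector_derivative has_vector_derivative_at_within)
  then have "((\<lambda>s. \<Sum>m\<in>UNIV. px m F t (c s) * vector_derivative c (at s) $ m)
      has_integral F t (c 1) - F t (c 0)) {0..1}"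
    by (intro fundamental_theorem_of_calculus) auto
  moreover have "c 1 = c 0"
    using c unfolding smooth_closed_curve_def by (metis add_0)
  ultimately show ?thesis
    by simp
qed

lemma second_grade_solution_smooth:
  assumes "second_grade_solution \<alpha> \<nu> \<Omega> u p"
  shows "smooth_field (comp u i)" and "smooth_field p"
  using assms unfolding second_grade_solution_def smooth_field_def comp_def by simp_all

lemma second_grade_solution_boundary:
  "second_grade_solution \<alpha> \<nu> \<Omega> u p \<Longrightarrow> t \<ge> 0 \<Longrightarrow> x \<in> frontier \<Omega> \<Longrightarrow> u t x = 0"
  unfolding second_grade_solution_def by blast

lemma second_grade_momentum_on_frontier:
  assumes sol: "second_grade_solution \<alpha> \<nu> \<Omega> u p" and "\<alpha> > 0"
    and "t > 0" and "x \<in> frontier \<Omega>"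
  shows "pt (comp (sg_v \<alpha> u) i) t x = - (\<nu> / \<alpha>) * sg_v \<alpha> u t x $ i
           - (\<Sum>j\<in>UNIV. sg_v \<alpha> u t x $ j * px i (comp u j) t x) - px i p t x"
proof -
  let ?v = "sg_v \<alpha> u"
  define E where "E z = pt (comp ?v i) (fst z) (snd z) - \<nu> * lap (comp u i) (fst z) (snd z)
      + (\<Sum>j\<in>UNIV. comp u j (fst z) (snd z) * px j (comp ?v i) (fst z) (snd z))
      + (\<Sum>j\<in>UNIV. comp ?v j (fst z) (snd z) * px i (comp u j) (fst z) (snd z))
      + px i p (fst z) (snd z)" for z
  have u: "smooth_field (comp u j)" for j
    using sol by (rule second_grade_solution_smooth)
  have v: "smooth_field (comp ?v j)" for j
    using u by (rule smooth_field_sg_v)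
  have "continuous_on (closure ({0<..} \<times> \<Omega>)) E"
    unfolding E_def using second_grade_solution_smooth(2)[OF sol]
    by (intro continuous_on_add continuous_on_diff continuous_on_mult continuous_on_sum
        continuous_on_const continuous_on_smooth_field u v smooth_field_pt smooth_field_px
        smooth_field_lap) auto
  moreover have "E z = 0" if "z \<in> {0<..} \<times> \<Omega>" for z
    using sol that unfolding second_grade_solution_def E_def comp_def by fastforce
  moreover have "(t, x) \<in> closure ({0<..} \<times> \<Omega>)"
    using assms(3,4) by (auto simp: closure_Times frontier_def)
  ultimately have "E (t, x) = 0"
    by (rule continuous_constant_on_closure)
  moreover have "u t x = 0"
    using second_grade_solution_boundary[OF sol] assms(3,4) by simp
  moreover have "\<nu> * lap (comp u i) t x = - (\<nu> / \<alpha>) * ?v t x $ i"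
    using \<open>u t x = 0\<close> \<open>\<alpha> > 0\<close> by (simp add: sg_v_def)
  ultimately show ?thesis
    unfolding E_def by (simp add: comp_def)
qed

lemma circulation_eq_integral:
  "circulation \<alpha> u c =
    (\<lambda>t. integral {0..1} (\<lambda>s. \<Sum>m\<in>UNIV. comp (sg_v \<alpha> u) m t (c s) * vector_derivative c (at s) $ m))"
  by (simp add: fun_eq_iff circulation_def inner_vec_def comp_def)

lemma circulation_has_real_derivative:
  assumes "\<And>m. smooth_field (comp (sg_v \<alpha> u) m)" and "smooth_closed_curve c"
  shows "(circulation \<alpha> u c has_real_derivative
           integral {0..1} (\<lambda>s. \<Sum>m\<in>UNIV. pt (comp (sg_v \<alpha> u) m) t (c s) * vector_derivative c (at s) $ m))
         (at t)"
  unfolding circulation_eq_integral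
  using has_real_derivative_line_integral[OF assms(1) continuous_on_smooth_closed_curve[OF assms(2)]
      continuous_on_vector_derivative_smooth_closed_curve[OF assms(2)]] .

lemma has_integral_circulation:
  assumes "\<And>m. smooth_field (comp (sg_v \<alpha> u) m)" and c: "smooth_closed_curve c"
  shows "((\<lambda>s. \<Sum>m\<in>UNIV. comp (sg_v \<alpha> u) m t (c s) * vector_derivative c (at s) $ m)
           has_integral circulation \<alpha> u c t) {0..1}"
proof -
  have "(\<lambda>s. \<Sum>m\<in>UNIV. comp (sg_v \<alpha> u) m t (c s) * vector_derivative c (at s) $ m) integrable_on {0..1}"
    using continuous_on_line_integrand[OF assms(1) continuous_on_smooth_closed_curve[OF c]
        continuous_on_vector_derivative_smooth_closed_curve[OF c] continuous_on_const continuous_on_id]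
    by (rule integrable_continuous_interval)
  then show ?thesis
    unfolding circulation_eq_integral by (rule integrable_integral)
qed

lemma circulation_decay_rate:
  assumes sol: "second_grade_solution \<alpha> \<nu> \<Omega> u p" and "\<alpha> > 0"
    and c: "smooth_closed_curve c" and boundary: "path_image c \<subseteq> frontier \<Omega>" and "t > 0"
  shows "(circulation \<alpha> u c has_real_derivative - (\<nu> / \<alpha>) * circulation \<alpha> u c t) (at t)"
proof -
  let ?v = "sg_v \<alpha> u" and ?c' = "\<lambda>s. vector_derivative c (at s)"
  have u: "smooth_field (comp u j)" for j
    using sol by (rule second_grade_solution_smooth)
  have v: "smooth_field (comp ?v j)" for j
    using u by (rule smooth_field_sg_v)
  have c_frontier: "c s \<in> frontier \<Omega>" for s
    using boundary smooth_closed_curve_in_path_image[OF c] by blast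
  have u_tangential: "(\<Sum>m\<in>UNIV. px m (comp u j) t (c s) * ?c' s $ m) = 0" for j s
    using second_grade_solution_boundary[OF sol] \<open>t > 0\<close> c_frontier
    by (intro tangential_derivative_eq_0[OF u c]) (simp add: comp_def)
  have pointwise: "(\<Sum>m\<in>UNIV. pt (comp ?v m) t (c s) * ?c' s $ m)
      = - (\<nu> / \<alpha>) * (\<Sum>m\<in>UNIV. comp ?v m t (c s) * ?c' s $ m)
        - (\<Sum>m\<in>UNIV. px m p t (c s) * ?c' s $ m)" for s
  proof -
    have "(\<Sum>m\<in>UNIV. pt (comp ?v m) t (c s) * ?c' s $ m)
        = (\<Sum>m\<in>UNIV. (- (\<nu> / \<alpha>) * ?v t (c s) $ m
            - (\<Sum>j\<in>UNIV. ?v t (c s) $ j * px m (comp u j) t (c s)) - px m p t (c s)) * ?c' s $ m)"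
      using second_grade_momentum_on_frontier[OF sol \<open>\<alpha> > 0\<close> \<open>t > 0\<close> c_frontier] by simp
    also have "\<dots> = - (\<nu> / \<alpha>) * (\<Sum>m\<in>UNIV. comp ?v m t (c s) * ?c' s $ m)
          - (\<Sum>j\<in>UNIV. ?v t (c s) $ j * (\<Sum>m\<in>UNIV. px m (comp u j) t (c s) * ?c' s $ m))
          - (\<Sum>m\<in>UNIV. px m p t (c s) * ?c' s $ m)"
      by (simp add: sum_2 comp_def algebra_simps)
    finally show ?thesis
      by (simp add: u_tangential)
  qed
  have "((\<lambda>s. \<Sum>m\<in>UNIV. pt (comp ?v m) t (c s) * ?c' s $ m)
      has_integral - (\<nu> / \<alpha>) * circulation \<alpha> u c t - 0) {0..1}"
    unfolding pointwise
    by (intro has_integral_diff has_integral_mult_right has_integral_circulation[OF v c]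
        has_integral_gradient_closed_curve[OF second_grade_solution_smooth(2)[OF sol] c])
  then show ?thesis
    using circulation_has_real_derivative[OF v c, of t] by (simp add: integral_unique)
qed

theorem lemma6p4:
  fixes \<alpha> \<nu> :: real and \<Omega> :: "(real^2) set" and N :: nat
    and g :: "nat \<Rightarrow> real \<Rightarrow> real^2"
    and u :: "real \<Rightarrow> real^2 \<Rightarrow> real^2" and p :: "real \<Rightarrow> real^2 \<Rightarrow> real"
  assumes "\<alpha> > 0" and "\<nu> > 0"
    and "open \<Omega>" and "connected \<Omega>" and "bounded \<Omega>"
    and "\<forall>i\<in>{0..N}. smooth_closed_curve (g i)"
    and "\<forall>i\<in>{0..N}. \<forall>j\<in>{0..N}. i \<noteq> j \<longrightarrow> path_image (g i) \<inter> path_image (g j) = {}"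
    and "\<forall>i\<in>{1..N}. path_image (g i) \<subseteq> inside (path_image (g 0))"
    and "frontier \<Omega> = path_image (g 0) \<union> (\<Union>i\<in>{1..N}. path_image (g i))"
    and "second_grade_solution \<alpha> \<nu> \<Omega> u p"
  shows "\<forall>i\<in>{1..N}. \<forall>t\<ge>0.
           circulation \<alpha> u (g i) t = circulation \<alpha> u (g i) 0 * exp (- (\<nu> / \<alpha>) * t)"
proof (intro ballI allI impI)
  fix i and t :: real
  assume i: "i \<in> {1..N}" and "t \<ge> 0"
  have c: "smooth_closed_curve (g i)"
    using assms(6) i by simp
  have boundary: "path_image (g i) \<subseteq> frontier \<Omega>"
    using assms(9) i by blast
  have "continuous_on {0..} (circulation \<alpha> u (g i))"
    using circulation_has_real_derivative[OF smooth_field_sg_v c] second_grade_solution_smooth(1)[OF assms(10)]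
    by (meson DERIV_isCont continuous_at_imp_continuous_on)
  moreover have "(circulation \<alpha> u (g i) has_real_derivative - (\<nu> / \<alpha>) * circulation \<alpha> u (g i) s) (at s)"
    if "s > 0" for s
    using circulation_decay_rate[OF assms(10,1) c boundary] that .
  ultimately show "circulation \<alpha> u (g i) t = circulation \<alpha> u (g i) 0 * exp (- (\<nu> / \<alpha>) * t)"
    using \<open>t \<ge> 0\<close> by (rule linear_ode_solution_eq_exp)
qed

end
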